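(* Let $\mathcal{F}_c^=$ and $\mathcal{S}_c^=$ be as defined in the context. Then $\operatorname{conv}(\mathcal{F}_c^=)=\operatorname{proj}_{(z,\mathbf{x})}\operatorname{conv}(\mathcal{S}_c^=)$.
   Context: Let $m\ge1$, $M=\{1,\dots,m\}$, $p\in\{1,\dots,m\}$, and $h_1\ge h_2\ge\dots\ge h_m\ge0$. The mixing set with a cardinality constraint is $\mathcal{F}_c^==\{(z,\mathbf{x})\in\mathbb{R}_+\times\{0,1\}^m : x_i=0\Rightarrow z\ge h_i\ \forall i\in M,\ \mathbf{1}^\top\mathbf{x}\le p\}$. Let $\Xi_c^==\{(z,\mathbf{x})\in\mathbb{R}_+\times\mathbb{R}^m_+ : \mathbf{x}\le\mathbf{1},\ \mathbf{1}^\top\mathbf{x}\le p\}$ and $\Delta_m=\{\mathbf{y}\in\mathbb{Z}^m_+:\mathbf{1}^\top\mathbf{y}\le1\}$. The set $\mathcal{S}_c^=$ is the set of $(z,\mathbf{x};\mathbf{y})\in\Xi_c^=\times\Delta_m$ satisfying: $(1-x_i)(1-\mathbf{1}^\top\mathbf{y})\ge0$ and $-(1-x_i)(1-\mathbf{1}^\top\mathbf{y})\ge0$ for all $i\in M$; $zy_i-h_iy_i\ge0$ for all $i\in M$; $-x_iy_i\ge0$ for all $i\in M$; $-(1-x_i)y_j\ge0$ for all $i,j\in M$ with $i<j$. *)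

theory Defs
  imports "HOL-Analysis.Analysis"
begin

text \<open>The index set M = {1,...,m} is modelled by a finite linearly ordered type 'n
  (m = CARD('n)); points (z,x) live in real \<times> (real, 'n) vec, points (z,x;y) in
  real \<times> (real, 'n) vec \<times> (real, 'n) vec.\<close>

definition mixF :: "('n::{finite,linorder} \<Rightarrow> real) \<Rightarrow> nat \<Rightarrow> (real \<times> (real, 'n) vec) set" where
  "mixF h p = {(z, x). z \<ge> 0 \<and> (\<forall>i. x $ i \<in> {0, 1})
      \<and> (\<forall>i. x $ i = 0 \<longrightarrow> z \<ge> h i) \<and> (\<Sum>i\<in>UNIV. x $ i) \<le> real p}"

definition Xi :: "nat \<Rightarrow> (real \<times> (real, 'n::finite) vec) set" where
  "Xi p = {(z, x). z \<ge> 0 \<and> (\<forall>i. 0 \<le> x $ i \<and> x $ i \<le> 1) \<and> (\<Sum>i\<in>UNIV. x $ i) \<le> real p}"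

definition Delta :: "((real, 'n::finite) vec) set" where
  "Delta = {y. (\<forall>i. y $ i \<in> \<int> \<and> y $ i \<ge> 0) \<and> (\<Sum>i\<in>UNIV. y $ i) \<le> 1}"

definition mixS :: "('n::{finite,linorder} \<Rightarrow> real) \<Rightarrow> nat \<Rightarrow> (real \<times> (real, 'n) vec \<times> (real, 'n) vec) set" where
  "mixS h p = {(z, x, y). (z, x) \<in> Xi p \<and> y \<in> Delta
      \<and> (\<forall>i. (1 - x $ i) * (1 - (\<Sum>j\<in>UNIV. y $ j)) \<ge> 0)
      \<and> (\<forall>i. - ((1 - x $ i) * (1 - (\<Sum>j\<in>UNIV. y $ j))) \<ge> 0)
      \<and> (\<forall>i. z * y $ i - h i * y $ i \<ge> 0)
      \<and> (\<forall>i. - (x $ i * y $ i) \<ge> 0)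
      \<and> (\<forall>i j. i < j \<longrightarrow> - ((1 - x $ i) * y $ j) \<ge> 0)}"

end

(* If y \<noteq> 0, the constraints of S force a coordinate k with y_k > 0, and then z \<ge> h_k, x_k = 0
   and x_i = 1 for all i < k; conversely every point of F lifts to S with y = e_k, k the first zero
   coordinate of x (or y = 0 if x = 1).  So it suffices to see that such a projected point is a convex
   combination of points of F with the same z.  Since h is antitone, every 0/1 vector u with
   \<Sum> u \<le> p and u_i = 1 for i < k gives (z, u) \<in> F, and the polytope
   {0 \<le> x \<le> 1, \<Sum> x \<le> p, x_i = 1 for i \<in> I} is integral: a point with fractional coordinates
   lies on a segment between two points of the polytope with fewer fractional coordinates, obtained
   by shifting mass between two fractional coordinates, or by rounding the only one up and down. *)

theory Submission
  imports Defs
begin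

lemma mem_closed_segment_shift:
  fixes x d :: "'a::real_vector"
  assumes "0 < s" "0 < t"
  shows "x \<in> closed_segment (x + t *\<^sub>R d) (x - s *\<^sub>R d)"
proof -
  define u where "u = t / (s + t)"
  have "(1 - u) * t - u * s = 0"
    using assms by (simp add: u_def field_simps)
  moreover have "(1 - u) *\<^sub>R (x + t *\<^sub>R d) + u *\<^sub>R (x - s *\<^sub>R d)
      = x + ((1 - u) * t - u * s) *\<^sub>R d"
    by (simp add: algebra_simps)
  ultimately have "x = (1 - u) *\<^sub>R (x + t *\<^sub>R d) + u *\<^sub>R (x - s *\<^sub>R d)"
    by simp
  moreover have "0 \<le> u" "u \<le> 1" using assms by (auto simp: u_def)
  ultimately show ?thesis unfolding in_segment by blast
qed

definition capped_cube :: "nat \<Rightarrow> 'n::finite set \<Rightarrow> (real, 'n) vec set" where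
  "capped_cube p I = {x. (\<forall>i. 0 \<le> x $ i \<and> x $ i \<le> 1) \<and> (\<Sum>i\<in>UNIV. x $ i) \<le> real p
      \<and> (\<forall>i\<in>I. x $ i = 1)}"

definition fractional_coords :: "(real, 'n::finite) vec \<Rightarrow> 'n set" where
  "fractional_coords x = {i. 0 < x $ i \<and> x $ i < 1}"

lemma capped_cube_nth_binary:
  assumes "x \<in> capped_cube p I" "k \<notin> fractional_coords x"
  shows "x $ k \<in> {0, 1}"
proof -
  have "0 \<le> x $ k" "x $ k \<le> 1" using assms(1) by (simp_all add: capped_cube_def)
  moreover have "\<not> (0 < x $ k \<and> x $ k < 1)" using assms(2) by (simp add: fractional_coords_def)
  ultimately show ?thesis by auto
qed

lemma capped_cube_split_two_fractional:
  fixes x :: "(real, 'n::finite) vec"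
  assumes x: "x \<in> capped_cube p I"
    and ij: "i \<in> fractional_coords x" "j \<in> fractional_coords x" "i \<noteq> j"
  obtains a b where "a \<in> capped_cube p I" "b \<in> capped_cube p I"
    "fractional_coords a \<subset> fractional_coords x" "fractional_coords b \<subset> fractional_coords x"
    "x \<in> closed_segment a b"
proof -
  define d :: "(real, 'n) vec" where "d = axis i 1 - axis j 1"
  define t where "t = min (1 - x $ i) (x $ j)"
  define s where "s = min (x $ i) (1 - x $ j)"
  have d_nth: "d $ k = (if k = i then 1 else if k = j then -1 else 0)" for k
    using ij(3) by (simp add: d_def axis_def)
  have sum_d: "(\<Sum>k\<in>UNIV. d $ k) = 0"
    by (simp add: d_def axis_def sum.distrib sum_subtractf)
  have xi: "0 < x $ i" "x $ i < 1" and xj: "0 < x $ j" "x $ j < 1"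
    using ij by (auto simp: fractional_coords_def)
  then have "0 < t" "0 < s" by (auto simp: t_def s_def)
  have shift_in: "x + c *\<^sub>R d \<in> capped_cube p I"
    if "-s \<le> c" "c \<le> t" for c
  proof -
    have "i \<notin> I" "j \<notin> I" using x xi xj by (auto simp: capped_cube_def)
    moreover have "(\<Sum>k\<in>UNIV. (x + c *\<^sub>R d) $ k) = (\<Sum>k\<in>UNIV. x $ k)"
      using sum_d by (simp add: sum.distrib flip: sum_distrib_left)
    ultimately show ?thesis
      using x that xi xj unfolding capped_cube_def by (auto simp: d_nth t_def s_def)
  qed
  have shift_frac: "fractional_coords (x + c *\<^sub>R d) \<subset> fractional_coords x"
    if "c = t \<or> c = - s" for c
  proof -
    have "fractional_coords (x + c *\<^sub>R d) \<subseteq> fractional_coords x"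
      using ij by (auto simp: fractional_coords_def d_nth split: if_splits)
    moreover have "i \<notin> fractional_coords (x + c *\<^sub>R d) \<or> j \<notin> fractional_coords (x + c *\<^sub>R d)"
      using that ij(3) by (auto simp: fractional_coords_def d_nth t_def s_def min_def split: if_splits)
    ultimately show ?thesis using ij by blast
  qed
  show ?thesis
  proof
    show "x + t *\<^sub>R d \<in> capped_cube p I" "x - s *\<^sub>R d \<in> capped_cube p I"
      using shift_in[of t] shift_in[of "-s"] \<open>0 < t\<close> \<open>0 < s\<close> by auto
    show "fractional_coords (x + t *\<^sub>R d) \<subset> fractional_coords x"
      "fractional_coords (x - s *\<^sub>R d) \<subset> fractional_coords x"
      using shift_frac[of t] shift_frac[of "-s"] by auto
    show "x \<in> closed_segment (x + t *\<^sub>R d) (x - s *\<^sub>R d)"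
      by (rule mem_closed_segment_shift) fact+
  qed
qed

lemma capped_cube_split_one_fractional:
  fixes x :: "(real, 'n::finite) vec"
  assumes x: "x \<in> capped_cube p I" and i: "fractional_coords x = {i}"
  obtains a b where "a \<in> capped_cube p I" "b \<in> capped_cube p I"
    "fractional_coords a \<subset> fractional_coords x" "fractional_coords b \<subset> fractional_coords x"
    "x \<in> closed_segment a b"
proof -
  define d :: "(real, 'n) vec" where "d = axis i 1"
  have xi: "0 < x $ i" "x $ i < 1" using i by (auto simp: fractional_coords_def)
  have x01: "0 \<le> x $ k" "x $ k \<le> 1" for k using x by (auto simp: capped_cube_def)
  have binary: "x $ k \<in> {0, 1}" if "k \<noteq> i" for k
    using capped_cube_nth_binary[OF x] i that by blast
  \<comment> \<open>The other coordinates are 0/1, so their sum N is an integer below p: x_i can be rounded up.\<close>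
  define N where "N = (\<Sum>k\<in>UNIV - {i}. x $ k)"
  have sum_x: "(\<Sum>k\<in>UNIV. x $ k) = x $ i + N"
    unfolding N_def by (rule sum.remove) auto
  have shift_sum: "(\<Sum>k\<in>UNIV. (x + c *\<^sub>R d) $ k) = x $ i + c + N" for c
    using sum_x by (simp add: d_def axis_def sum.distrib flip: sum_distrib_left)
  have "N \<in> \<int>"
    unfolding N_def by (intro Ints_sum) (use binary in fastforce)
  moreover have "N < real p" using sum_x xi x by (auto simp: capped_cube_def)
  ultimately have "N + 1 \<le> real p"
  proof (induction rule: Ints_induct)
    case (of_int m)
    then have "m + 1 \<le> int p" by (metis of_int_less_iff of_int_of_nat_eq zless_imp_add1_zle)
    then show ?case by (metis of_int_1 of_int_add of_int_le_iff of_int_of_nat_eq)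
  qed
  have shift_in: "x + c *\<^sub>R d \<in> capped_cube p I" if "c = 1 - x $ i \<or> c = - x $ i" for c
  proof -
    have "i \<notin> I" using x xi by (auto simp: capped_cube_def)
    then have "\<forall>k\<in>I. (x + c *\<^sub>R d) $ k = 1" using x by (auto simp: capped_cube_def d_def axis_def)
    moreover have "\<forall>k. 0 \<le> (x + c *\<^sub>R d) $ k \<and> (x + c *\<^sub>R d) $ k \<le> 1"
      using that x01 by (auto simp: d_def axis_def)
    moreover have "(\<Sum>k\<in>UNIV. (x + c *\<^sub>R d) $ k) \<le> real p"
      unfolding shift_sum using that \<open>N + 1 \<le> real p\<close> xi by auto
    ultimately show ?thesis unfolding capped_cube_def by blast
  qed
  have shift_frac: "fractional_coords (x + c *\<^sub>R d) \<subset> fractional_coords x"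
    if "c = 1 - x $ i \<or> c = - x $ i" for c
  proof -
    define y where "y = x + c *\<^sub>R d"
    have "y $ k \<in> {0, 1}" for k
      using that binary[of k] by (cases "k = i") (auto simp: y_def d_def axis_def)
    then have "\<not> (0 < y $ k \<and> y $ k < 1)" for k
      by (metis insert_iff less_irrefl less_numeral_extra(1) singletonD)
    then have "fractional_coords y = {}"
      by (simp add: fractional_coords_def)
    then show ?thesis using i by (auto simp: y_def)
  qed
  show ?thesis
  proof
    show "x + (1 - x $ i) *\<^sub>R d \<in> capped_cube p I" "x - x $ i *\<^sub>R d \<in> capped_cube p I"
      using shift_in[of "1 - x $ i"] shift_in[of "- x $ i"] by auto
    show "fractional_coords (x + (1 - x $ i) *\<^sub>R d) \<subset> fractional_coords x"
      "fractional_coords (x - x $ i *\<^sub>R d) \<subset> fractional_coords x"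
      using shift_frac[of "1 - x $ i"] shift_frac[of "- x $ i"] by auto
    show "x \<in> closed_segment (x + (1 - x $ i) *\<^sub>R d) (x - x $ i *\<^sub>R d)"
      using xi by (intro mem_closed_segment_shift) auto
  qed
qed

lemma capped_cube_split_fractional:
  fixes x :: "(real, 'n::finite) vec"
  assumes x: "x \<in> capped_cube p I" and "fractional_coords x \<noteq> {}"
  obtains a b where "a \<in> capped_cube p I" "b \<in> capped_cube p I"
    "fractional_coords a \<subset> fractional_coords x" "fractional_coords b \<subset> fractional_coords x"
    "x \<in> closed_segment a b"
proof -
  obtain i where i: "i \<in> fractional_coords x" using assms(2) by blast
  show ?thesis
  proof (cases "fractional_coords x = {i}")
    case True
    then show ?thesis using capped_cube_split_one_fractional[OF x] that by blast
  next
    case False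
    then obtain j where "j \<in> fractional_coords x" "i \<noteq> j" using i by blast
    then show ?thesis using capped_cube_split_two_fractional[OF x i] that by blast
  qed
qed

lemma capped_cube_subset_convex_hull_binary:
  fixes I :: "'n::finite set"
  shows "capped_cube p I \<subseteq> convex hull {u \<in> capped_cube p I. \<forall>i. u $ i \<in> {0, 1}}"
    (is "_ \<subseteq> convex hull ?B")
proof
  fix x :: "(real, 'n) vec"
  assume "x \<in> capped_cube p I"
  then show "x \<in> convex hull ?B"
  proof (induction "card (fractional_coords x)" arbitrary: x rule: less_induct)
    case less
    show ?case
    proof (cases "fractional_coords x = {}")
      case True
      then have "x \<in> ?B" using less.prems capped_cube_nth_binary by blast
      then show ?thesis by (rule hull_inc)
    next
      case False
      with less.prems obtain a b where ab: "a \<in> capped_cube p I" "b \<in> capped_cube p I"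
        "fractional_coords a \<subset> fractional_coords x" "fractional_coords b \<subset> fractional_coords x"
        "x \<in> closed_segment a b"
        by (rule capped_cube_split_fractional)
      have "card (fractional_coords a) < card (fractional_coords x)"
        "card (fractional_coords b) < card (fractional_coords x)"
        using ab(3,4) by (simp_all add: psubset_card_mono)
      then have "a \<in> convex hull ?B" "b \<in> convex hull ?B"
        using ab(1,2) less.hyps by blast+
      then show ?thesis using ab(5) closed_segment_subset_convex_hull by blast
    qed
  qed
qed

lemma convex_hull_eq_linear_image_convex_hull:
  assumes "linear f" "A \<subseteq> f ` B" "f ` B \<subseteq> convex hull A"
  shows "convex hull A = f ` (convex hull B)"
proof -
  have "convex hull (f ` B) \<subseteq> convex hull A"
    using assms(3) by (rule hull_minimal) simp
  moreover have "convex hull A \<subseteq> convex hull (f ` B)"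
    using assms(2) by (rule hull_mono)
  ultimately show ?thesis
    using convex_hull_linear_image[OF assms(1)] by blast
qed

lemma linear_drop_last: "linear (\<lambda>(z, x, y :: 'c::real_vector). (z :: 'a::real_vector, x :: 'b::real_vector))"
  by (intro linearI) (auto simp: case_prod_beta)

lemma mixF_subset_Xi: "mixF h p \<subseteq> Xi p"
  unfolding mixF_def Xi_def by auto (metis order.refl zero_le_one)+

lemma mixF_lift_to_mixS:
  assumes "(z, x) \<in> mixF h p"
  obtains y where "(z, x, y) \<in> mixS h p"
proof (cases "\<forall>i. x $ i = 1")
  case True
  then have "(z, x, 0) \<in> mixS h p"
    using assms mixF_subset_Xi by (auto simp: mixS_def Delta_def)
  then show ?thesis by (rule that)
next
  case False
  define k where "k = Min {i. x $ i \<noteq> 1}"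
  have "k \<in> {i. x $ i \<noteq> 1}" unfolding k_def using False by (intro Min_in) auto
  then have xk: "x $ k = 0" using assms by (auto simp: mixF_def)
  have below_k: "x $ i = 1" if "i < k" for i
  proof (rule ccontr)
    assume "x $ i \<noteq> 1"
    then have "k \<le> i" unfolding k_def by (simp add: Min_le)
    with that show False by simp
  qed
  have "(z, x, axis k 1) \<in> mixS h p"
    using assms mixF_subset_Xi xk below_k by (auto simp: mixF_def mixS_def Delta_def axis_def)
  then show ?thesis by (rule that)
qed

lemma mixS_proj_mem_convex_hull_mixF:
  assumes antitone: "\<And>i j. i \<le> j \<Longrightarrow> h j \<le> h i"
    and S: "(z, x, y) \<in> mixS h p"
  shows "(z, x) \<in> convex hull (mixF h p)"
proof (cases "\<forall>i. y $ i = 0")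
  case True
  then have "\<forall>i. x $ i = 1" using S by (auto simp: mixS_def intro: order.antisym)
  then have "(z, x) \<in> mixF h p" using S by (auto simp: mixS_def Xi_def mixF_def)
  then show ?thesis by (rule hull_inc)
next
  case False
  then obtain k where "y $ k \<noteq> 0" by blast
  then have yk: "0 < y $ k" using S by (auto simp: mixS_def Delta_def order_less_le)
  have "h k * y $ k \<le> z * y $ k" using S by (simp add: mixS_def)
  with yk have z: "0 \<le> z" "h k \<le> z" using S by (simp_all add: mixS_def Xi_def)
  have "x $ i = 1" if "i < k" for i
  proof -
    have "(1 - x $ i) * y $ k \<le> 0" using S that by (simp add: mixS_def)
    then have "1 \<le> x $ i" using yk by (simp add: mult_le_0_iff)
    then show ?thesis using S by (simp add: mixS_def Xi_def order.antisym)
  qed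
  then have "x \<in> capped_cube p {i. i < k}"
    using S by (auto simp: mixS_def Xi_def capped_cube_def)
  then have "(z, x) \<in> {z} \<times> (convex hull {u \<in> capped_cube p {i. i < k}. \<forall>i. u $ i \<in> {0, 1}})"
    using capped_cube_subset_convex_hull_binary by blast
  also have "\<dots> = convex hull ({z} \<times> {u \<in> capped_cube p {i. i < k}. \<forall>i. u $ i \<in> {0, 1}})"
    by (simp add: convex_hull_Times)
  also have "\<dots> \<subseteq> convex hull (mixF h p)"
  proof (rule hull_mono, safe)
    fix u :: "(real, 'a) vec"
    assume u: "u \<in> capped_cube p {i. i < k}" "\<forall>i. u $ i \<in> {0, 1}"
    have "h i \<le> z" if "u $ i = 0" for i
    proof -
      have "\<not> i < k" using u(1) that by (auto simp: capped_cube_def)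
      then show ?thesis using antitone[of k i] z(2) by (simp add: not_less)
    qed
    then show "(z, u) \<in> mixF h p"
      using u z by (auto simp: capped_cube_def mixF_def)
  qed
  finally show ?thesis .
qed

theorem mainTheorem7:
  fixes h :: "'n::{finite,linorder} \<Rightarrow> real" and p :: nat
  assumes "1 \<le> p" and "p \<le> CARD('n)"
    and "\<And>i j. i \<le> j \<Longrightarrow> h j \<le> h i"
    and "\<And>i. 0 \<le> h i"
  shows "convex hull (mixF h p) = (\<lambda>(z, x, y). (z, x)) ` (convex hull (mixS h p))"
proof (rule convex_hull_eq_linear_image_convex_hull)
  show "linear (\<lambda>(z, x, y :: (real, 'n) vec). (z :: real, x :: (real, 'n) vec))"
    by (rule linear_drop_last)
  show "mixF h p \<subseteq> (\<lambda>(z, x, y). (z, x)) ` mixS h p"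
  proof (clarify)
    fix z x
    assume "(z, x) \<in> mixF h p"
    then obtain y where "(z, x, y) \<in> mixS h p" by (rule mixF_lift_to_mixS)
    then show "(z, x) \<in> (\<lambda>(z, x, y). (z, x)) ` mixS h p" by force
  qed
  show "(\<lambda>(z, x, y). (z, x)) ` mixS h p \<subseteq> convex hull (mixF h p)"
    using mixS_proj_mem_convex_hull_mixF[OF assms(3)] by auto
qed

end
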